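(* Suppose $G_{ii}>0$ for every $i\in\{1,\dots,p\}$. Then the problem $\min_{u\in\mathbb{R}^H}F(u)$, with $F(u):=p\log\big(\sum_{i=1}^pe^{(Bu)_i}G_{ii}\big)-\sum_{i=1}^p(Bu)_i$, has a solution.
   Context: $\mathcal G=(V,E)$ is a finite DAG; input neurons have no incoming edges, output neurons no outgoing edges, hidden neurons $\mathcal H$ ($H=|\mathcal H|$) are the rest. $\theta\in\mathbb{R}^p$ consists of one weight per edge and one bias $b_v$ per non-input neuron $v$. For $h\in\mathcal H$, $\mathrm{in}_h$ = indices of $b_h$ and of weights of edges entering $h$, $\mathrm{out}_h$ = indices of weights of edges leaving $h$. $B\in\mathbb{R}^{p\times H}$ has $B_{ih}=-1$ if $i\in\mathrm{in}_h$, $1$ if $i\in\mathrm{out}_h$, $0$ otherwise. $G=\partial\Phi(\theta)^\top\partial\Phi(\theta)$ where $\Phi:\mathbb{R}^p\to\mathbb{R}^q$ is the path-lifting: for each path $v_0\to\cdots\to v_d$ along edges ending at an output neuron (for $d=0$, $v_0$ non-input), the coordinate is the product of the weights along the path, times $b_{v_0}$ if $v_0$ is not an input neuron. *)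

theory Defs
  imports "HOL-Analysis.Analysis"
begin

text \<open>Parameters are indexed by the type ('v \<times> 'v) + 'v: Inl e is the weight of
edge e, Inr v is the bias of the (non-input) neuron v.\<close>

definition inputs :: "'v set \<Rightarrow> ('v \<times> 'v) set \<Rightarrow> 'v set" where
  "inputs V E = {v \<in> V. \<forall>u. (u, v) \<notin> E}"

definition outputs :: "'v set \<Rightarrow> ('v \<times> 'v) set \<Rightarrow> 'v set" where
  "outputs V E = {v \<in> V. \<forall>w. (v, w) \<notin> E}"

definition hidden :: "'v set \<Rightarrow> ('v \<times> 'v) set \<Rightarrow> 'v set" where
  "hidden V E = V - inputs V E - outputs V E"

definition params :: "'v set \<Rightarrow> ('v \<times> 'v) set \<Rightarrow> (('v \<times> 'v) + 'v) set" where
  "params V E = Inl ` E \<union> Inr ` (V - inputs V E)"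

definition paths :: "'v set \<Rightarrow> ('v \<times> 'v) set \<Rightarrow> 'v list set" where
  "paths V E = {\<gamma>. \<gamma> \<noteq> [] \<and> set \<gamma> \<subseteq> V \<and> successively (\<lambda>a b. (a, b) \<in> E) \<gamma>
      \<and> last \<gamma> \<in> outputs V E \<and> (length \<gamma> = 1 \<longrightarrow> hd \<gamma> \<notin> inputs V E)}"

definition path_lift :: "'v set \<Rightarrow> ('v \<times> 'v) set \<Rightarrow> (('v \<times> 'v) + 'v \<Rightarrow> real) \<Rightarrow> 'v list \<Rightarrow> real" where
  "path_lift V E \<theta> \<gamma> =
     prod_list (map (\<lambda>e. \<theta> (Inl e)) (zip \<gamma> (tl \<gamma>)))
     * (if hd \<gamma> \<notin> inputs V E then \<theta> (Inr (hd \<gamma>)) else 1)"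

definition jac :: "'v set \<Rightarrow> ('v \<times> 'v) set \<Rightarrow> (('v \<times> 'v) + 'v \<Rightarrow> real) \<Rightarrow> 'v list \<Rightarrow> ('v \<times> 'v) + 'v \<Rightarrow> real" where
  "jac V E \<theta> \<gamma> i = deriv (\<lambda>t. path_lift V E (\<theta>(i := t)) \<gamma>) (\<theta> i)"

definition Gmat :: "'v set \<Rightarrow> ('v \<times> 'v) set \<Rightarrow> (('v \<times> 'v) + 'v \<Rightarrow> real) \<Rightarrow> ('v \<times> 'v) + 'v \<Rightarrow> ('v \<times> 'v) + 'v \<Rightarrow> real" where
  "Gmat V E \<theta> i j = (\<Sum>\<gamma>\<in>paths V E. jac V E \<theta> \<gamma> i * jac V E \<theta> \<gamma> j)"

definition in_idx :: "('v \<times> 'v) set \<Rightarrow> 'v \<Rightarrow> (('v \<times> 'v) + 'v) set" where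
  "in_idx E h = {Inr h} \<union> Inl ` {e \<in> E. snd e = h}"

definition out_idx :: "('v \<times> 'v) set \<Rightarrow> 'v \<Rightarrow> (('v \<times> 'v) + 'v) set" where
  "out_idx E h = Inl ` {e \<in> E. fst e = h}"

definition Bmat :: "('v \<times> 'v) set \<Rightarrow> ('v \<times> 'v) + 'v \<Rightarrow> 'v \<Rightarrow> real" where
  "Bmat E i h = (if i \<in> in_idx E h then -1 else if i \<in> out_idx E h then 1 else 0)"

text \<open>(Bu)_i for u in R^H (u given as a function on vertices; only values on hidden
neurons matter).\<close>
definition Bu :: "'v set \<Rightarrow> ('v \<times> 'v) set \<Rightarrow> ('v \<Rightarrow> real) \<Rightarrow> ('v \<times> 'v) + 'v \<Rightarrow> real" where
  "Bu V E u i = (\<Sum>h\<in>hidden V E. Bmat E i h * u h)"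

definition Fobj :: "'v set \<Rightarrow> ('v \<times> 'v) set \<Rightarrow> (('v \<times> 'v) + 'v \<Rightarrow> real) \<Rightarrow> ('v \<Rightarrow> real) \<Rightarrow> real" where
  "Fobj V E \<theta> u =
     real (card (params V E)) * ln (\<Sum>i\<in>params V E. exp (Bu V E u i) * Gmat V E \<theta> i i)
     - (\<Sum>i\<in>params V E. Bu V E u i)"

end

theory Submission
  imports Defs
begin

text \<open>With x = Bu, c i = G i i and p the number of parameters, for any two parameters j and k
  p ln (\<Sum>i. e^(x i) c i) - \<Sum>i. x i \<ge> p ln (min c) + x j - x k,
because the log-sum-exp term is at least p (max x + ln (min c)) while the linear term is at most
x k + (p - 1) max x. The bias of a hidden neuron h has x = -u h, and the bias of an output neuron
(one exists below h by acyclicity) has x = 0, so F(u) \<ge> C + \<bar>u h\<bar>. Since F only depends on the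
hidden coordinates, it is continuous and coercive on \<real>^H and attains its minimum on a compact box.\<close>

lemma card_ln_sum_exp_minus_sum_ge:
  fixes x c :: "'a \<Rightarrow> real"
  assumes "finite P" "c0 > 0" "\<And>i. i \<in> P \<Longrightarrow> c0 \<le> c i" "j \<in> P" "k \<in> P"
  shows "real (card P) * ln (\<Sum>i\<in>P. exp (x i) * c i) - (\<Sum>i\<in>P. x i)
         \<ge> real (card P) * ln c0 + x j - x k"
proof -
  have c_pos: "0 < c i" if "i \<in> P" for i
    using assms(2,3) that by fastforce
  define M where "M = Max (x ` P)"
  have x_le_M: "x i \<le> M" if "i \<in> P" for i
    unfolding M_def using assms(1) that by auto
  have "M \<in> x ` P"
    unfolding M_def using assms(1,4) by (intro Max_in) auto
  then obtain m where m: "m \<in> P" "x m = M"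
    by blast
  have "exp M * c0 \<le> exp (x m) * c m"
    using assms(3) m by simp
  also have "\<dots> \<le> (\<Sum>i\<in>P. exp (x i) * c i)"
    using assms(1) m(1) c_pos by (intro member_le_sum) (auto intro: less_imp_le)
  finally have "ln (exp M * c0) \<le> ln (\<Sum>i\<in>P. exp (x i) * c i)"
    using assms(2) by (intro ln_mono) auto
  then have ln_sum: "M + ln c0 \<le> ln (\<Sum>i\<in>P. exp (x i) * c i)"
    using assms(2) by (simp add: ln_mult)
  have "(\<Sum>i\<in>P. x i) = x k + (\<Sum>i\<in>P - {k}. x i)"
    using assms(1,5) by (simp add: sum.remove)
  also have "\<dots> \<le> x k + real (card (P - {k})) * M"
    using x_le_M by (intro add_left_mono sum_bounded_above) auto
  also have "real (card (P - {k})) = real (card P) - 1"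
    using card.remove[OF assms(1,5)] by simp
  finally have "(\<Sum>i\<in>P. x i) \<le> x k + (real (card P) - 1) * M" .
  moreover have "real (card P) * (M + ln c0) \<le> real (card P) * ln (\<Sum>i\<in>P. exp (x i) * c i)"
    using ln_sum by (intro mult_left_mono) auto
  moreover have "x j \<le> M"
    using x_le_M assms(4) by blast
  ultimately show ?thesis
    by (simp add: algebra_simps)
qed

lemma continuous_coercive_attains_min:
  fixes f :: "('a \<Rightarrow> real) \<Rightarrow> real"
  assumes cont: "continuous_on UNIV f"
    and restrict: "\<And>u. f (\<lambda>v. if v \<in> H then u v else 0) = f u"
    and coercive: "\<And>u h. h \<in> H \<Longrightarrow> C + \<bar>u h\<bar> \<le> f u"
  shows "\<exists>u. \<forall>w. f u \<le> f w"
proof -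
  define K where "K = f (\<lambda>_. 0) - C"
  define U where "U = PiE UNIV (\<lambda>v. if v \<in> H then {-K..K} else {0})"
  have "compactin (product_topology (\<lambda>_. euclidean) UNIV) U"
    unfolding U_def compactin_PiE by simp
  then have "compact U"
    by (simp add: euclidean_product_topology)
  moreover have zero_in_U: "(\<lambda>_. 0) \<in> U"
    using coercive[where u = "\<lambda>_. 0"] by (auto simp: U_def K_def)
  ultimately obtain u where "u \<in> U" and u_min: "\<And>w. w \<in> U \<Longrightarrow> f u \<le> f w"
    using continuous_attains_inf[of U f] continuous_on_subset[OF cont] by blast
  have "f u \<le> f w" for w
  proof (cases "\<forall>h\<in>H. w h \<in> {-K..K}")
    case True
    then have "(\<lambda>v. if v \<in> H then w v else 0) \<in> U"
      by (auto simp: U_def)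
    then show ?thesis
      using u_min restrict by metis
  next
    case False
    then obtain h where "h \<in> H" "K < \<bar>w h\<bar>"
      by force
    then have "f (\<lambda>_. 0) < f w"
      using coercive[of h w] by (simp add: K_def)
    then show ?thesis
      using u_min[OF zero_in_U] by simp
  qed
  then show ?thesis
    by blast
qed

lemma exists_non_input_output:
  assumes "finite V" "E \<subseteq> V \<times> V" "acyclic E" "h \<in> hidden V E"
  shows "\<exists>w. w \<in> outputs V E \<and> w \<notin> inputs V E"
proof -
  have wf: "wf (E\<inverse>)"
    using finite_acyclic_wf_converse[OF finite_subset[OF assms(2)] assms(3)] assms(1) by simp
  obtain w0 where "(h, w0) \<in> E"
    using assms(4) by (auto simp: hidden_def outputs_def)
  then have "w0 \<in> {w. (h, w) \<in> E\<^sup>+}"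
    by simp
  then obtain w where "w \<in> {w. (h, w) \<in> E\<^sup>+}"
    and maximal: "\<And>y. (y, w) \<in> E\<inverse> \<Longrightarrow> y \<notin> {w. (h, w) \<in> E\<^sup>+}"
    by (rule wfE_min[OF wf]) (rule that)
  then have hw: "(h, w) \<in> E\<^sup>+"
    by simp
  have "(w, y) \<notin> E" for y
    using maximal[of y] trancl_into_trancl[OF hw, of y] by blast
  moreover obtain z where "(z, w) \<in> E"
    using hw by (metis tranclE)
  moreover have "w \<in> V"
    using assms(2) \<open>(z, w) \<in> E\<close> by blast
  ultimately show ?thesis
    by (auto simp: outputs_def inputs_def)
qed

lemma Bu_Inr_hidden:
  assumes "finite V" "h \<in> hidden V E"
  shows "Bu V E u (Inr h) = - u h"
proof -
  have "Bu V E u (Inr h) = (\<Sum>h'\<in>hidden V E. if h' = h then - u h' else 0)"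
    unfolding Bu_def by (rule sum.cong) (auto simp: Bmat_def in_idx_def out_idx_def)
  then show ?thesis
    using assms by (simp add: hidden_def)
qed

lemma Bu_Inr_output:
  assumes "w \<in> outputs V E"
  shows "Bu V E u (Inr w) = 0"
  unfolding Bu_def
  by (rule sum.neutral) (use assms in \<open>auto simp: Bmat_def in_idx_def out_idx_def hidden_def\<close>)

lemma Fobj_restrict_hidden:
  "Fobj V E \<theta> (\<lambda>v. if v \<in> hidden V E then u v else 0) = Fobj V E \<theta> u"
proof -
  have "Bu V E (\<lambda>v. if v \<in> hidden V E then u v else 0) = Bu V E u"
    unfolding Bu_def by (intro ext sum.cong) auto
  then show ?thesis
    unfolding Fobj_def by simp
qed

lemma finite_params:
  assumes "finite V" "E \<subseteq> V \<times> V"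
  shows "finite (params V E)"
  using assms finite_subset[OF assms(2)] by (simp add: params_def)

lemma continuous_on_Bu: "continuous_on UNIV (\<lambda>u. Bu V E u i)"
  unfolding Bu_def
  by (intro continuous_on_sum continuous_on_mult continuous_on_const continuous_on_product_coordinates)

lemma continuous_on_Fobj:
  assumes "finite V" "E \<subseteq> V \<times> V" "\<forall>i\<in>params V E. Gmat V E \<theta> i i > 0"
  shows "continuous_on UNIV (Fobj V E \<theta>)"
proof (cases "params V E = {}")
  case True
  then show ?thesis
    by (simp add: Fobj_def)
next
  case False
  then have "(\<Sum>i\<in>params V E. exp (Bu V E u i) * Gmat V E \<theta> i i) \<noteq> 0" for u
    using assms finite_params[OF assms(1,2)]
    by (intro sum_pos mult_pos_pos less_imp_neq[symmetric]) auto
  then show ?thesis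
    unfolding Fobj_def
    by (intro continuous_on_diff continuous_on_mult continuous_on_const continuous_on_ln
        continuous_on_sum continuous_on_exp continuous_on_Bu) blast
qed

lemma Fobj_ge_abs_hidden:
  assumes "finite V" "E \<subseteq> V \<times> V" "acyclic E" "\<forall>i\<in>params V E. Gmat V E \<theta> i i > 0"
    and "h \<in> hidden V E"
  shows "real (card (params V E)) * ln (Min ((\<lambda>i. Gmat V E \<theta> i i) ` params V E)) + \<bar>u h\<bar>
         \<le> Fobj V E \<theta> u"
proof -
  obtain w where w: "w \<in> outputs V E" "w \<notin> inputs V E"
    using exists_non_input_output[OF assms(1-3,5)] by blast
  have bias_w: "Inr w \<in> params V E"
    using w by (auto simp: params_def outputs_def)
  have bias_h: "Inr h \<in> params V E"
    using assms(5) by (auto simp: params_def hidden_def)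
  have fin: "finite (params V E)"
    using finite_params[OF assms(1,2)] .
  have Min_pos: "Min ((\<lambda>i. Gmat V E \<theta> i i) ` params V E) > 0"
    using fin bias_w assms(4) by (subst Min_gr_iff) auto
  have "real (card (params V E)) * ln (Min ((\<lambda>i. Gmat V E \<theta> i i) ` params V E))
          + Bu V E u j - Bu V E u k \<le> Fobj V E \<theta> u"
    if "j \<in> params V E" "k \<in> params V E" for j k
    unfolding Fobj_def using fin that
    by (intro card_ln_sum_exp_minus_sum_ge[OF fin Min_pos]) auto
  from this[OF bias_w bias_h] this[OF bias_h bias_w] show ?thesis
    using Bu_Inr_hidden[OF assms(1,5)] Bu_Inr_output[OF w(1)] by (auto simp: abs_if)
qed

theorem corollaryF6:
  fixes V :: "'v set" and E :: "('v \<times> 'v) set" and \<theta> :: "('v \<times> 'v) + 'v \<Rightarrow> real"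
  assumes "finite V" and "E \<subseteq> V \<times> V" and "acyclic E"
    and "\<forall>i\<in>params V E. Gmat V E \<theta> i i > 0"
  shows "\<exists>u :: 'v \<Rightarrow> real. \<forall>w :: 'v \<Rightarrow> real. Fobj V E \<theta> u \<le> Fobj V E \<theta> w"
  using continuous_coercive_attains_min[OF continuous_on_Fobj[OF assms(1,2,4)]
      Fobj_restrict_hidden Fobj_ge_abs_hidden[OF assms]] .

end
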